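(* Let $f:\mathbb{R}_+\to\mathbb{R}$ be completely monotone to order four. Then for every nonnegative real random variable $W$, \[ \operatorname{Cov}(W,f'(W))=\mathbb{E}\big[(W-\mathbb{E}W)f'(W)\big]\le\mathbb{E}[W^2]\cdot\mathbb{E}[f''(W)], \] whenever the expectations are finite.
   Context: A function $f:I\to\mathbb{R}$ on an interval $I\subseteq\mathbb{R}$ is completely monotone to order $K$ if its first $K$ derivatives exist and $(-1)^kf^{(k)}(w)\ge0$ for all $w\in I$ and each $k=0,1,\dots,K$; at an endpoint of $I$ contained in $I$, derivatives are one-sided. Here $\mathbb{R}_+=[0,\infty)$. *)

theory Defs
  imports "HOL-Probability.Probability"
begin

text \<open>The function
  is given together with its sequence of derivatives D: D 0 is the function itself,
  D (Suc k) is the derivative of D k (one-sided at endpoints contained in S, via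
  derivatives within S), for k < K, and (-1)^k * D k w \<ge> 0 for all w in S, k \<le> K.\<close>

definition completely_monotone_order :: "nat \<Rightarrow> real set \<Rightarrow> (nat \<Rightarrow> real \<Rightarrow> real) \<Rightarrow> bool" where
  "completely_monotone_order K S D \<longleftrightarrow>
     (\<forall>k<K. \<forall>w\<in>S. (D k has_real_derivative D (Suc k) w) (at w within S)) \<and>
     (\<forall>k\<le>K. \<forall>w\<in>S. (-1) ^ k * D k w \<ge> 0)"

end

theory Submission
  imports Defs
begin

text \<open>For an independent copy W' of W, Cov(W, f'(W)) = E[(W - W')(f'(W) - f'(W'))] / 2.
  For 0 \<le> a \<le> b, concavity of f' (as f''' \<le> 0) gives
  (b - a)(f'(b) - f'(a)) \<le> f''(a)(b - a)^2 \<le> b^2 f''(a), so with f'' \<ge> 0 we get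
  (a - b)(f'(a) - f'(b)) \<le> b^2 f''(a) + a^2 f''(b) for all a, b \<ge> 0, whose expectation is
  2 E[W^2] E[f''(W)]. The independent copy is avoided by integrating this pointwise bound
  in each variable in turn.\<close>

lemma completely_monotone_order_deriv:
  assumes "completely_monotone_order K S D" "k < K" "w \<in> S"
  shows "(D k has_real_derivative D (Suc k) w) (at w within S)"
  using assms unfolding completely_monotone_order_def by blast

lemma completely_monotone_order_sign:
  assumes "completely_monotone_order K S D" "k \<le> K" "w \<in> S"
  shows "(-1) ^ k * D k w \<ge> 0"
  using assms unfolding completely_monotone_order_def by blast

lemma completely_monotone_order_mvt:
  assumes cm: "completely_monotone_order K S D" and "k < K"
    and "{a..b} \<subseteq> S" "a < b"
  obtains x where "a < x" "x < b" "D k b - D k a = D (Suc k) x * (b - a)"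
proof -
  have deriv: "(D k has_derivative (*) (D (Suc k) x)) (at x within {a..b})"
    if "a \<le> x" "x \<le> b" for x
  proof -
    have "(D k has_real_derivative D (Suc k) x) (at x within S)"
      using completely_monotone_order_deriv[OF cm \<open>k < K\<close>] that assms(3) by auto
    then have "(D k has_real_derivative D (Suc k) x) (at x within {a..b})"
      using DERIV_subset assms(3) by blast
    then show ?thesis
      by (simp add: has_field_derivative_def)
  qed
  from mvt_simple[OF \<open>a < b\<close> deriv] obtain x
    where "x \<in> {a<..<b}" "D k b - D k a = D (Suc k) x * (b - a)"
    by blast
  then show ?thesis
    by (intro that) auto
qed

lemma completely_monotone_order_antimono:
  assumes cm: "completely_monotone_order K S D" and "k < K"
    and ab: "{a..b} \<subseteq> S" "a \<le> b"
  shows "(-1) ^ k * D k b \<le> (-1) ^ k * D k a"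
proof (cases "a = b")
  case False
  with ab obtain x where x: "a < x" "x < b" "D k b - D k a = D (Suc k) x * (b - a)"
    using completely_monotone_order_mvt[OF cm \<open>k < K\<close>] by (metis order_less_le)
  have "x \<in> S"
    using x ab by auto
  then have "(-1) ^ Suc k * D (Suc k) x \<ge> 0"
    using completely_monotone_order_sign[OF cm, of "Suc k"] \<open>k < K\<close> by simp
  then have "(-1) ^ k * D (Suc k) x \<le> 0"
    by simp
  then have "(-1) ^ k * (D k b - D k a) \<le> 0"
    unfolding x(3) using ab by (simp add: mult_nonpos_nonneg flip: mult.assoc)
  then show ?thesis
    by (simp add: right_diff_distrib)
qed simp

lemma completely_monotone_order_tangent_bound:
  assumes cm: "completely_monotone_order K S D" and "Suc k < K"
    and ab: "{a..b} \<subseteq> S" "a \<le> b"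
  shows "(-1) ^ Suc k * (D k b - D k a) \<le> (-1) ^ Suc k * D (Suc k) a * (b - a)"
proof (cases "a = b")
  case False
  with ab obtain x where x: "a < x" "x < b" "D k b - D k a = D (Suc k) x * (b - a)"
    using completely_monotone_order_mvt[OF cm Suc_lessD[OF \<open>Suc k < K\<close>]]
    by (metis order_less_le)
  have "{a..x} \<subseteq> S"
    using x ab by auto
  then have "(-1) ^ Suc k * D (Suc k) x \<le> (-1) ^ Suc k * D (Suc k) a"
    using completely_monotone_order_antimono[OF cm \<open>Suc k < K\<close>] x by simp
  then show ?thesis
    unfolding x(3) using ab by (simp add: mult_right_mono flip: mult.assoc)
qed simp

lemma completely_monotone_order_deriv_increment_le:
  assumes cm: "completely_monotone_order K {0..} D" and "3 \<le> K"
    and "0 \<le> a" "a \<le> b"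
  shows "(b - a) * (D 1 b - D 1 a) \<le> b\<^sup>2 * D 2 a"
proof -
  have "D 1 b - D 1 a \<le> D 2 a * (b - a)"
    using completely_monotone_order_tangent_bound[OF cm, of 1 a b] assms
    by (simp add: numeral_eq_Suc)
  then have "(b - a) * (D 1 b - D 1 a) \<le> (b - a) * (D 2 a * (b - a))"
    using \<open>a \<le> b\<close> by (simp add: mult_left_mono)
  also have "\<dots> = D 2 a * (b - a)\<^sup>2"
    by (simp add: power2_eq_square)
  also have "\<dots> \<le> D 2 a * b\<^sup>2"
    using completely_monotone_order_sign[OF cm, of 2 a] assms
    by (intro mult_left_mono power_mono) auto
  finally show ?thesis
    by (simp add: mult.commute)
qed

lemma completely_monotone_order_symmetrized_bound:
  assumes cm: "completely_monotone_order K {0..} D" and "3 \<le> K"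
    and "0 \<le> a" "0 \<le> b"
  shows "(a - b) * (D 1 a - D 1 b) \<le> b\<^sup>2 * D 2 a + a\<^sup>2 * D 2 b"
proof -
  have "D 2 a \<ge> 0" "D 2 b \<ge> 0"
    using completely_monotone_order_sign[OF cm, of 2] assms by auto
  then have "b\<^sup>2 * D 2 a \<ge> 0" "a\<^sup>2 * D 2 b \<ge> 0"
    by simp_all
  moreover have "(a - b) * (D 1 a - D 1 b) = (b - a) * (D 1 b - D 1 a)"
    by algebra
  ultimately show ?thesis
    using completely_monotone_order_deriv_increment_le[OF cm \<open>3 \<le> K\<close>, of a b]
      completely_monotone_order_deriv_increment_le[OF cm \<open>3 \<le> K\<close>, of b a] assms
    by (cases "a \<le> b") linarith+
qed

lemma (in prob_space) covariance_le_of_symmetrized_bound: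
  fixes X Y g h :: "'a \<Rightarrow> real"
  assumes X: "integrable M X" and Y: "integrable M Y" and XY: "integrable M (\<lambda>x. X x * Y x)"
    and g: "integrable M g" and h: "integrable M h"
    and bound: "\<And>x y. x \<in> space M \<Longrightarrow> y \<in> space M \<Longrightarrow>
      (X x - X y) * (Y x - Y y) \<le> g x * h y + g y * h x"
  shows "(\<integral>x. (X x - expectation X) * Y x \<partial>M) \<le> expectation g * expectation h"
proof -
  let ?cov = "expectation (\<lambda>x. X x * Y x) - expectation X * expectation Y"
  have expand: "(X x - X y) * (Y x - Y y) = X x * Y x - X y * Y x - Y y * X x + X y * Y y"
    for x y
    by algebra
  have pointwise: "expectation (\<lambda>x. X x * Y x) - X y * expectation Y - Y y * expectation X
      + X y * Y y \<le> expectation g * h y + g y * expectation h"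
    if "y \<in> space M" for y
  proof -
    have "(\<integral>x. (X x - X y) * (Y x - Y y) \<partial>M) \<le> (\<integral>x. g x * h y + g y * h x \<partial>M)"
      using X Y XY g h bound[OF _ that] unfolding expand by (intro integral_mono) auto
    then show ?thesis
      unfolding expand using X Y XY g h by (simp add: prob_space)
  qed
  have "(\<integral>y. expectation (\<lambda>x. X x * Y x) - X y * expectation Y - Y y * expectation X
      + X y * Y y \<partial>M) \<le> (\<integral>y. expectation g * h y + g y * expectation h \<partial>M)"
    using X Y XY g h pointwise by (intro integral_mono) auto
  then have "2 * ?cov \<le> 2 * (expectation g * expectation h)"
    using X Y XY g h by (simp add: prob_space)
  moreover have "(\<integral>x. (X x - expectation X) * Y x \<partial>M) = ?cov"
    using Y XY by (simp add: left_diff_distrib)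
  ultimately show ?thesis
    by simp
qed

theorem lemma7p3:
  fixes M :: "'a measure" and W :: "'a \<Rightarrow> real" and D :: "nat \<Rightarrow> real \<Rightarrow> real"
  assumes "prob_space M"
    and "completely_monotone_order 4 {0..} D"
    and "W \<in> borel_measurable M"
    and "\<forall>x\<in>space M. W x \<ge> 0"
    and "integrable M W"
    and "integrable M (\<lambda>x. D 1 (W x))"
    and "integrable M (\<lambda>x. W x * D 1 (W x))"
    and "integrable M (\<lambda>x. (W x)\<^sup>2)"
    and "integrable M (\<lambda>x. D 2 (W x))"
  shows "(\<integral>x. (W x - (\<integral>y. W y \<partial>M)) * D 1 (W x) \<partial>M)
           \<le> (\<integral>x. (W x)\<^sup>2 \<partial>M) * (\<integral>x. D 2 (W x) \<partial>M)"
proof (rule prob_space.covariance_le_of_symmetrized_bound[OF assms(1,5-9)])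
  fix x y
  assume "x \<in> space M" "y \<in> space M"
  then have "0 \<le> W x" "0 \<le> W y"
    using assms(4) by auto
  from completely_monotone_order_symmetrized_bound[OF assms(2) _ this]
  show "(W x - W y) * (D 1 (W x) - D 1 (W y))
      \<le> (W x)\<^sup>2 * D 2 (W y) + (W y)\<^sup>2 * D 2 (W x)"
    by simp
qed

end
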